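(* Let $X\in\mathbb R^{n\times d}$ ($d\ge n$) with $XX^\top$ nonsingular, $\Sigma$ symmetric positive definite, $\sigma>0$, and $\rho\in D:=\{\rho\ge0:\Sigma-\frac\rho dX^\top X\succ0\}$. Then $$\mathcal P(A(\rho,\Sigma);\Sigma)-\mathcal P(A(0,\Sigma);\Sigma)=\frac{\rho^2\sigma^4}{d}\mathrm{Tr}\Big(\big(\Sigma-\tfrac\rho dX^\top X\big)^{-1}\Sigma\big(\Sigma-\tfrac\rho dX^\top X\big)^{-1}X^\top X(X^\top X+d\sigma^2I)^{-1}\Big),$$ and $$\mathcal T(A(\rho,\Sigma);\Sigma)=\frac{d\sigma^4}{n}\mathrm{Tr}\Big(\Sigma\big(\Sigma-\tfrac\rho dX^\top X\big)^{-1}X^\top X\big(\Sigma-\tfrac\rho dX^\top X\big)^{-1}\Sigma(X^\top X)^\dagger(X^\top X+d\sigma^2I)^{-1}\Big).$$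
   Context: $\mathcal P(A;\Sigma):=\frac1d\|\Sigma^{1/2}(AX-I)\|_F^2+\sigma^2\|\Sigma^{1/2}A\|_F^2$, $\mathcal T(A;\Sigma):=\frac1{nd}\|XAX-X\|_F^2+\frac{\sigma^2}{n}\|XA-I\|_F^2$, and $A(\rho,\Sigma):=\big(I-\rho\sigma^2(\Sigma-\frac\rho dX^\top X)^{-1}\big)(X^\top X+d\sigma^2I)^{-1}X^\top$. $(\cdot)^\dagger$ is the Moore–Penrose pseudoinverse. *)

theory Defs
  imports "HOL-Analysis.Analysis"
begin

text \<open>Real matrices are rendered as \<open>real^'c^'r\<close> (r rows, c columns).\<close>

definition sym_mat :: "real^'n^'n \<Rightarrow> bool" where
  "sym_mat M \<longleftrightarrow> transpose M = M"

definition pos_def :: "real^'n^'n \<Rightarrow> bool" where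
  "pos_def M \<longleftrightarrow> sym_mat M \<and> (\<forall>x. x \<noteq> 0 \<longrightarrow> x \<bullet> (M *v x) > 0)"

definition pos_semidef :: "real^'n^'n \<Rightarrow> bool" where
  "pos_semidef M \<longleftrightarrow> sym_mat M \<and> (\<forall>x. x \<bullet> (M *v x) \<ge> 0)"

definition mat_sqrt :: "real^'n^'n \<Rightarrow> real^'n^'n" where
  "mat_sqrt M = (THE R. pos_semidef R \<and> R ** R = M)"

definition frob_norm :: "real^'c^'r \<Rightarrow> real" where
  "frob_norm M = sqrt (\<Sum>i\<in>UNIV. \<Sum>j\<in>UNIV. (M $ i $ j)\<^sup>2)"

definition pinv :: "real^'c^'r \<Rightarrow> real^'r^'c" where
  "pinv M = (THE B. M ** B ** M = M \<and> B ** M ** B = B \<and>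
                    transpose (M ** B) = M ** B \<and> transpose (B ** M) = B ** M)"

definition riskP :: "real \<Rightarrow> real^'d^'n \<Rightarrow> real^'n^'d \<Rightarrow> real^'d^'d \<Rightarrow> real" where
  "riskP \<sigma> X A \<Sigma> =
     (1 / real CARD('d)) * (frob_norm (mat_sqrt \<Sigma> ** (A ** X - mat 1)))\<^sup>2
     + \<sigma>\<^sup>2 * (frob_norm (mat_sqrt \<Sigma> ** A))\<^sup>2"

definition riskT :: "real \<Rightarrow> real^'d^'n \<Rightarrow> real^'n^'d \<Rightarrow> real^'d^'d \<Rightarrow> real" where
  "riskT \<sigma> X A \<Sigma> =
     (1 / (real CARD('n) * real CARD('d))) * (frob_norm (X ** A ** X - X))\<^sup>2
     + (\<sigma>\<^sup>2 / real CARD('n)) * (frob_norm (X ** A - mat 1))\<^sup>2"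

definition Aopt :: "real \<Rightarrow> real^'d^'n \<Rightarrow> real \<Rightarrow> real^'d^'d \<Rightarrow> real^'n^'d" where
  "Aopt \<sigma> X \<rho> \<Sigma> =
     (mat 1 - (\<rho> * \<sigma>\<^sup>2) *\<^sub>R matrix_inv (\<Sigma> - (\<rho> / real CARD('d)) *\<^sub>R (transpose X ** X)))
     ** matrix_inv (transpose X ** X + (real CARD('d) * \<sigma>\<^sup>2) *\<^sub>R mat 1) ** transpose X"

end

theory Submission
  imports Defs
begin

(*
  Write G = X^T X, K = (G + d sigma^2 I)^-1 and N = (Sigma - (rho/d) G)^-1, so that
  A(rho, Sigma) = (I - rho sigma^2 N) K X^T.  For any E, the identity K (G + d sigma^2 I) = I
  merges the two terms of P(E K X^T) into  d P = tr(E^T Sigma E G K) - 2 tr(Sigma E G K) + tr Sigma.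
  For E = I - t N the terms linear in t cancel because Sigma, N and G K are symmetric, leaving
  t^2 tr(N Sigma N G K).
  For T, Q = X^T (X X^T)^-1 is a right inverse of X with Q Q^T = (X^T X)^+, and
  d sigma^2 N Sigma = d sigma^2 I + rho sigma^2 N G turns X A - I into -d sigma^2 X N Sigma K Q;
  both terms of T then collapse through K (G + d sigma^2 I) = I once more.
  Sigma^(1/2) is the unique positive semidefinite square root, which exists by the spectral
  theorem for symmetric matrices.
*)

lemma matrix_add_rdistrib: "(B + C) ** A = B ** A + C ** A"
  by (vector matrix_matrix_mult_def sum.distrib[symmetric] field_simps)

lemma matrix_diff_ldistrib: "A ** (B - C) = A ** B - A ** (C :: 'a::ring_1^_^_)"
  by (vector matrix_matrix_mult_def sum_subtractf[symmetric] field_simps)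

lemma matrix_diff_rdistrib: "(B - C) ** A = B ** A - C ** (A :: 'a::ring_1^_^_)"
  by (vector matrix_matrix_mult_def sum_subtractf[symmetric] field_simps)

lemma matrix_scaleR_left: "(k *\<^sub>R A) ** B = k *\<^sub>R (A ** B)"
  for A :: "'a::real_algebra_1^'n^'m"
  by (simp add: scalar_matrix_assoc)

lemma matrix_scaleR_right: "A ** (k *\<^sub>R B) = k *\<^sub>R (A ** B)"
  for A :: "'a::real_algebra_1^'n^'m"
  by (simp add: matrix_scalar_ac scalar_matrix_assoc)

lemma transpose_add: "transpose (A + B) = transpose A + transpose B"
  by (simp add: transpose_def vec_eq_iff)

lemma transpose_diff: "transpose (A - B) = transpose A - transpose (B :: 'a::ab_group_add^_^_)"
  by (simp add: transpose_def vec_eq_iff)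

lemma trace_scaleR: "trace (k *\<^sub>R A) = k * trace (A :: real^'n^'n)"
  by (simp add: trace_def sum_distrib_left)

lemma trace_transpose: "trace (transpose A) = trace (A :: 'a::semiring_1^'n^'n)"
  by (simp add: trace_def transpose_def)

lemma mat_mult_vector: "mat k *v x = k *\<^sub>R (x :: real^'n)"
  by (vector matrix_vector_mult_def mat_def) (simp add: if_distrib if_distribR cong del: if_weak_cong)

lemma frob_norm_sq: "(frob_norm A)\<^sup>2 = trace (transpose A ** A)"
proof -
  have "(frob_norm A)\<^sup>2 = (\<Sum>i\<in>UNIV. \<Sum>j\<in>UNIV. (A $ i $ j)\<^sup>2)"
    unfolding frob_norm_def by (intro real_sqrt_pow2 sum_nonneg) simp
  also have "\<dots> = (\<Sum>j\<in>UNIV. \<Sum>i\<in>UNIV. (A $ i $ j)\<^sup>2)" by (rule sum.swap)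
  finally show ?thesis
    unfolding trace_def by (simp add: matrix_matrix_mult_def transpose_def power2_eq_square)
qed

lemma frob_norm_sq': "(frob_norm A)\<^sup>2 = trace (A ** transpose A)"
  using frob_norm_sq[of A] trace_mul_sym[of "transpose A" A] by simp

lemma frob_norm_scaleR: "frob_norm (k *\<^sub>R A) = \<bar>k\<bar> * frob_norm A"
  by (simp add: frob_norm_def power_mult_distrib sum_distrib_left[symmetric] real_sqrt_mult)

lemma matrix_inv_right: "invertible A \<Longrightarrow> A ** matrix_inv A = mat 1"
  and matrix_inv_left: "invertible A \<Longrightarrow> matrix_inv A ** A = mat 1"
  unfolding invertible_def matrix_inv_def by (metis (mono_tags, lifting) someI_ex)+

lemma transpose_matrix_inv_sym:
  fixes A :: "real^'n^'n"
  assumes "invertible A" "transpose A = A"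
  shows "transpose (matrix_inv A) = matrix_inv A"
proof -
  have "transpose (matrix_inv A) ** A = mat 1"
    using arg_cong[OF matrix_inv_right[OF assms(1)], of transpose] assms(2)
    by (simp add: matrix_transpose_mul)
  hence "transpose (matrix_inv A) = transpose (matrix_inv A) ** (A ** matrix_inv A)"
    using matrix_inv_right[OF assms(1)] by simp
  also have "\<dots> = matrix_inv A"
    by (simp add: matrix_mul_assoc \<open>transpose (matrix_inv A) ** A = mat 1\<close>)
  finally show ?thesis .
qed

lemma matrix_inv_shift_commute:
  fixes A :: "real^'n^'n"
  assumes "invertible (A + c *\<^sub>R mat 1)"
  shows "matrix_inv (A + c *\<^sub>R mat 1) ** A = A ** matrix_inv (A + c *\<^sub>R mat 1)"
proof -
  let ?K = "matrix_inv (A + c *\<^sub>R mat 1)"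
  have "?K ** A + c *\<^sub>R ?K = A ** ?K + c *\<^sub>R ?K"
    using matrix_inv_left[OF assms] matrix_inv_right[OF assms]
    by (simp add: matrix_add_ldistrib matrix_add_rdistrib matrix_scaleR_left matrix_scaleR_right)
  thus ?thesis by simp
qed

lemma pos_def_invertible:
  fixes A :: "real^'n^'n"
  assumes "pos_def A"
  shows "invertible A"
proof -
  have "inj ((*v) A)"
  proof (rule injI)
    fix x y assume "A *v x = A *v y"
    hence "(x - y) \<bullet> (A *v (x - y)) = 0" by (simp add: matrix_vector_mult_diff_distrib)
    thus "x = y" using assms unfolding pos_def_def by (metis less_irrefl right_minus_eq)
  qed
  thus ?thesis using matrix_left_invertible_injective invertible_left_inverse by blast
qed

lemma pos_def_imp_pos_semidef: "pos_def A \<Longrightarrow> pos_semidef A"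
  unfolding pos_def_def pos_semidef_def by (metis inner_zero_left order_le_less)

lemma pos_def_gram_shift:
  fixes X :: "real^'d^'n"
  assumes "c > 0"
  shows "pos_def (transpose X ** X + c *\<^sub>R mat 1)"
  unfolding pos_def_def sym_mat_def
proof (intro conjI allI impI)
  show "transpose (transpose X ** X + c *\<^sub>R mat 1) = transpose X ** X + c *\<^sub>R mat 1"
    by (simp add: transpose_add transpose_scalar matrix_transpose_mul)
  fix x :: "real^'d" assume "x \<noteq> 0"
  have "(transpose X ** X) *v x = (X *v x) v* X"
    by (simp add: matrix_vector_mul_assoc[symmetric])
  hence "x \<bullet> ((transpose X ** X) *v x) = (X *v x) \<bullet> (X *v x)"
    by (metis dot_lmul_matrix inner_commute)
  moreover have "(c *\<^sub>R mat 1) *v x = c *\<^sub>R x"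
    by (simp add: scaleR_matrix_vector_assoc[symmetric])
  ultimately show "x \<bullet> ((transpose X ** X + c *\<^sub>R mat 1) *v x) > 0"
    using assms \<open>x \<noteq> 0\<close> by (simp add: matrix_vector_mult_add_rdistrib inner_add_right add_nonneg_pos)
qed

section \<open>Spectral theorem and positive semidefinite square roots\<close>

lemma inner_matrix_vector_sym:
  fixes A :: "real^'n^'n"
  assumes "transpose A = A"
  shows "x \<bullet> (A *v y) = y \<bullet> (A *v x)"
  by (metis assms dot_lmul_matrix inner_commute transpose_matrix_vector)

lemma nonneg_quadratic_linear_coeff_eq_0:
  fixes a b :: real
  assumes "\<And>s. 0 \<le> 2 * s * a + s\<^sup>2 * b"
  shows "a = 0"
proof (rule ccontr)
  assume "a \<noteq> 0"
  define s where "s = - a / (\<bar>b\<bar> + 1)"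
  have s: "s * (\<bar>b\<bar> + 1) = - a" unfolding s_def by (simp add: add_pos_nonneg)
  have "0 \<le> (\<bar>b\<bar> + 1)\<^sup>2 * (2 * s * a + s\<^sup>2 * b)" using assms[of s] by simp
  also have "\<dots> \<le> (\<bar>b\<bar> + 1)\<^sup>2 * (2 * s * a + s\<^sup>2 * \<bar>b\<bar>)"
    by (intro mult_left_mono add_left_mono) (simp_all add: mult_left_mono)
  also have "\<dots> = 2 * a * (s * (\<bar>b\<bar> + 1)) * (\<bar>b\<bar> + 1) + (s * (\<bar>b\<bar> + 1))\<^sup>2 * \<bar>b\<bar>"
    by (simp add: power2_eq_square algebra_simps)
  also have "\<dots> = - a\<^sup>2 * (\<bar>b\<bar> + 2)" unfolding s by (simp add: power2_eq_square algebra_simps)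
  also have "\<dots> < 0" using \<open>a \<noteq> 0\<close> by (simp add: add_pos_nonneg)
  finally show False by simp
qed

lemma nonneg_form_eq_0_imp_bilinear_eq_0:
  fixes A :: "real^'n^'n"
  assumes A: "transpose A = A" and W: "subspace W"
    and nonneg: "\<And>x. x \<in> W \<Longrightarrow> 0 \<le> x \<bullet> (A *v x)"
    and v: "v \<in> W" "v \<bullet> (A *v v) = 0" and w: "w \<in> W"
  shows "w \<bullet> (A *v v) = 0"
proof (rule nonneg_quadratic_linear_coeff_eq_0)
  fix s :: real
  have "v + s *\<^sub>R w \<in> W" using W v w by (simp add: subspace_add subspace_scale)
  hence "0 \<le> (v + s *\<^sub>R w) \<bullet> (A *v (v + s *\<^sub>R w))" by (rule nonneg)
  also have "\<dots> = v \<bullet> (A *v v) + s * (v \<bullet> (A *v w)) + s * (w \<bullet> (A *v v)) + s\<^sup>2 * (w \<bullet> (A *v w))"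
    by (simp add: matrix_vector_right_distrib matrix_vector_mult_scaleR inner_add_left inner_add_right
        power2_eq_square algebra_simps)
  finally show "0 \<le> 2 * s * (w \<bullet> (A *v v)) + s\<^sup>2 * (w \<bullet> (A *v w))"
    using v(2) inner_matrix_vector_sym[OF A, of v w] by simp
qed

lemma quadratic_form_max_on_subspace:
  fixes A :: "real^'n^'n"
  assumes W: "subspace W" and u: "u \<in> W" "u \<noteq> 0"
  obtains v where "v \<in> W" "norm v = 1" "\<And>x. x \<in> W \<Longrightarrow> x \<bullet> (A *v x) \<le> (v \<bullet> (A *v v)) * (norm x)\<^sup>2"
proof -
  let ?S = "sphere 0 1 \<inter> W"
  have "compact ?S" using closed_subspace[OF W] by (intro compact_Int_closed compact_sphere)
  moreover have "u /\<^sub>R norm u \<in> ?S" using u W by (simp add: subspace_scale)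
  moreover have "continuous_on ?S (\<lambda>x. x \<bullet> (A *v x))" by (intro continuous_intros)
  ultimately obtain v where v: "v \<in> ?S" and vmax: "\<And>y. y \<in> ?S \<Longrightarrow> y \<bullet> (A *v y) \<le> v \<bullet> (A *v v)"
    using continuous_attains_sup[of ?S] by blast
  show thesis
  proof
    show "v \<in> W" "norm v = 1" using v by auto
    fix x assume x: "x \<in> W"
    show "x \<bullet> (A *v x) \<le> (v \<bullet> (A *v v)) * (norm x)\<^sup>2"
    proof (cases "x = 0")
      case False
      have "x /\<^sub>R norm x \<in> ?S" using x W False by (simp add: subspace_scale)
      hence "(x /\<^sub>R norm x) \<bullet> (A *v (x /\<^sub>R norm x)) \<le> v \<bullet> (A *v v)" by (rule vmax)
      moreover have "(x /\<^sub>R norm x) \<bullet> (A *v (x /\<^sub>R norm x)) = (x \<bullet> (A *v x)) / (norm x)\<^sup>2"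
        using False by (simp add: matrix_vector_mult_scaleR power2_eq_square field_simps)
      ultimately show ?thesis using False by (simp add: divide_le_eq mult.commute)
    qed simp
  qed
qed

lemma symmetric_invariant_subspace_eigenvector:
  fixes A :: "real^'n^'n"
  assumes A: "transpose A = A" and W: "subspace W" and u: "u \<in> W" "u \<noteq> 0"
    and invariant: "\<And>x. x \<in> W \<Longrightarrow> A *v x \<in> W"
  obtains v where "v \<in> W" "norm v = 1" "A *v v = (v \<bullet> (A *v v)) *\<^sub>R v"
proof -
  obtain v where v: "v \<in> W" "norm v = 1"
    and vmax: "\<And>x. x \<in> W \<Longrightarrow> x \<bullet> (A *v x) \<le> (v \<bullet> (A *v v)) * (norm x)\<^sup>2"
    using quadratic_form_max_on_subspace[OF W u] by blast
  \<comment> \<open>A maximiser v of the Rayleigh quotient makes \<open>m I - A\<close> positive semidefinite on W with v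
    in its kernel.\<close>
  define m where "m = v \<bullet> (A *v v)"
  define B where "B = mat m - A"
  have Bx: "B *v x = m *\<^sub>R x - A *v x" for x
    unfolding B_def by (simp add: matrix_vector_mult_diff_rdistrib mat_mult_vector)
  have "(B *v v) \<bullet> (B *v v) = 0"
  proof (rule nonneg_form_eq_0_imp_bilinear_eq_0[OF _ W _ v(1)])
    show "transpose B = B" unfolding B_def by (simp add: transpose_diff A)
    show "0 \<le> x \<bullet> (B *v x)" if "x \<in> W" for x
      using vmax[OF that] by (simp add: Bx inner_diff_right power2_norm_eq_inner m_def)
    show "v \<bullet> (B *v v) = 0" using v(2) by (simp add: Bx inner_diff_right norm_eq_1 m_def)
    show "B *v v \<in> W" using v(1) invariant W by (simp add: Bx subspace_diff subspace_scale)
  qed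
  hence "A *v v = m *\<^sub>R v" by (simp add: Bx)
  thus thesis using that v m_def by blast
qed

lemma orthonormal_sum_inner_delta:
  fixes B :: "'a::real_inner set"
  assumes "pairwise orthogonal B" "\<And>b. b \<in> B \<Longrightarrow> norm b = 1" "finite B" "c \<in> B"
  shows "(\<Sum>b\<in>B. g b * (c \<bullet> b)) = g c"
proof -
  have "(\<Sum>b\<in>B. g b * (c \<bullet> b)) = (\<Sum>b\<in>B. if b = c then g c else 0)"
  proof (rule sum.cong)
    fix b assume "b \<in> B"
    show "g b * (c \<bullet> b) = (if b = c then g c else 0)"
      using assms pairwiseD[OF assms(1) \<open>c \<in> B\<close> \<open>b \<in> B\<close>] \<open>b \<in> B\<close>
      by (auto simp: orthogonal_def norm_eq_1)
  qed simp
  thus ?thesis using assms(3,4) by simp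
qed

theorem symmetric_matrix_orthonormal_eigenbasis:
  fixes A :: "real^'n^'n"
  assumes A: "transpose A = A"
  obtains B where "finite B" "pairwise orthogonal B" "\<And>b. b \<in> B \<Longrightarrow> norm b = 1"
    "\<And>b. b \<in> B \<Longrightarrow> A *v b = (b \<bullet> (A *v b)) *\<^sub>R b"
    "\<And>x. (\<Sum>b\<in>B. (b \<bullet> x) *\<^sub>R b) = x"
proof -
  \<comment> \<open>Take a largest orthonormal family of eigenvectors; the orthogonal complement of its span is
    invariant under A, so if it were nonzero it would contain one more eigenvector.\<close>
  define ok where "ok B \<longleftrightarrow> pairwise orthogonal B \<and> (\<forall>b\<in>B. norm b = 1 \<and> A *v b = (b \<bullet> (A *v b)) *\<^sub>R b)"
    for B :: "(real^'n) set"
  have ok_finite: "finite B \<and> card B < Suc DIM(real^'n)" if "ok B" for B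
  proof -
    have "independent B"
      using that unfolding ok_def by (intro pairwise_orthogonal_independent) force+
    hence "finite B \<and> card B \<le> DIM(real^'n)" by (rule independent_bound)
    thus ?thesis by simp
  qed
  have "ok {}" unfolding ok_def by simp
  then obtain B where okB: "ok B" and maxB: "\<And>B'. ok B' \<Longrightarrow> card B' \<le> card B"
    using Lattices_Big.ex_has_greatest_nat[of ok "{}" card "Suc DIM(real^'n)"] ok_finite by blast
  have finB: "finite B" using ok_finite[OF okB] by blast
  have orthB: "pairwise orthogonal B" and normB: "\<And>b. b \<in> B \<Longrightarrow> norm b = 1"
    and eigB: "\<And>b. b \<in> B \<Longrightarrow> A *v b = (b \<bullet> (A *v b)) *\<^sub>R b"
    using okB unfolding ok_def by auto
  have "(\<Sum>b\<in>B. (b \<bullet> x) *\<^sub>R b) = x" for x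
  proof (rule ccontr)
    assume ne: "(\<Sum>b\<in>B. (b \<bullet> x) *\<^sub>R b) \<noteq> x"
    define W where "W = {y. \<forall>b\<in>B. b \<bullet> y = 0}"
    have W: "subspace W" unfolding W_def subspace_def by (simp add: inner_add_right)
    have "x - (\<Sum>b\<in>B. (b \<bullet> x) *\<^sub>R b) \<in> W"
      using orthonormal_sum_inner_delta[OF orthB normB finB, of _ "\<lambda>b. b \<bullet> x"]
      unfolding W_def by (simp add: inner_diff_right inner_sum_right)
    moreover have "A *v y \<in> W" if "y \<in> W" for y
    proof -
      have "b \<bullet> (A *v y) = 0" if "b \<in> B" for b
      proof -
        have "b \<bullet> (A *v y) = y \<bullet> (A *v b)" by (rule inner_matrix_vector_sym[OF A])
        also have "\<dots> = (b \<bullet> (A *v b)) * (y \<bullet> b)" by (subst eigB[OF that]) (rule inner_scaleR_right)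
        also have "y \<bullet> b = 0" using \<open>y \<in> W\<close> that unfolding W_def by (simp add: inner_commute)
        finally show ?thesis by simp
      qed
      thus ?thesis unfolding W_def by blast
    qed
    moreover have "x - (\<Sum>b\<in>B. (b \<bullet> x) *\<^sub>R b) \<noteq> 0" using ne by simp
    ultimately obtain v where v: "v \<in> W" "norm v = 1" "A *v v = (v \<bullet> (A *v v)) *\<^sub>R v"
      using symmetric_invariant_subspace_eigenvector[OF A W] by blast
    have "v \<notin> B"
    proof
      assume "v \<in> B"
      hence "v \<bullet> v = 0" using v(1) unfolding W_def by blast
      thus False using v(2) by simp
    qed
    moreover have "ok (insert v B)"
      using okB v unfolding ok_def W_def pairwise_insert by (auto simp: orthogonal_def inner_commute)
    ultimately show False using maxB[of "insert v B"] finB by simp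
  qed
  thus thesis using that finB orthB normB eigB by blast
qed

lemma pos_semidef_sqrt_exists:
  fixes A :: "real^'n^'n"
  assumes A: "pos_semidef A"
  obtains R where "pos_semidef R" "R ** R = A"
proof -
  have A_sym: "transpose A = A" using A unfolding pos_semidef_def sym_mat_def by blast
  obtain B where finB: "finite B" and orthB: "pairwise orthogonal B" and normB: "\<And>b. b \<in> B \<Longrightarrow> norm b = 1"
    and eigB: "\<And>b. b \<in> B \<Longrightarrow> A *v b = (b \<bullet> (A *v b)) *\<^sub>R b"
    and expand: "\<And>x. (\<Sum>b\<in>B. (b \<bullet> x) *\<^sub>R b) = x"
    using symmetric_matrix_orthonormal_eigenbasis[OF A_sym] by blast
  define lam where "lam b = b \<bullet> (A *v b)" for b
  have lam_nonneg: "0 \<le> lam b" for b using A unfolding lam_def pos_semidef_def by blast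
  define R :: "real^'n^'n" where "R = (\<chi> i j. \<Sum>b\<in>B. sqrt (lam b) * (b $ i * b $ j))"
  have R_apply: "R *v y = (\<Sum>b\<in>B. (sqrt (lam b) * (b \<bullet> y)) *\<^sub>R b)" for y
  proof -
    have "(R *v y) $ i = (\<Sum>b\<in>B. sqrt (lam b) * (b \<bullet> y) * b $ i)" for i
    proof -
      have "(R *v y) $ i = (\<Sum>j\<in>UNIV. \<Sum>b\<in>B. sqrt (lam b) * (b $ i * b $ j) * y $ j)"
        unfolding R_def matrix_vector_mult_def by (simp add: sum_distrib_right)
      also have "\<dots> = (\<Sum>b\<in>B. \<Sum>j\<in>UNIV. sqrt (lam b) * b $ i * (b $ j * y $ j))"
        by (subst sum.swap) (simp add: mult_ac)
      also have "\<dots> = (\<Sum>b\<in>B. sqrt (lam b) * (b \<bullet> y) * b $ i)"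
        by (simp add: inner_vec_def sum_distrib_left mult_ac)
      finally show ?thesis .
    qed
    thus ?thesis by (simp add: vec_eq_iff)
  qed
  have R_inner: "c \<bullet> (R *v y) = sqrt (lam c) * (c \<bullet> y)" if "c \<in> B" for c y
    unfolding R_apply inner_sum_right inner_scaleR_right
    by (rule orthonormal_sum_inner_delta[OF orthB normB finB that])
  have "R ** R = A"
  proof (subst matrix_eq, intro allI)
    fix x
    have "(R ** R) *v x = (\<Sum>b\<in>B. (sqrt (lam b) * (b \<bullet> (R *v x))) *\<^sub>R b)"
      by (simp only: matrix_vector_mul_assoc[symmetric] R_apply[of "R *v x"])
    also have "\<dots> = (\<Sum>b\<in>B. (b \<bullet> x) *\<^sub>R (A *v b))"
    proof (rule sum.cong)
      fix c assume c: "c \<in> B"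
      have "sqrt (lam c) * (c \<bullet> (R *v x)) = lam c * (c \<bullet> x)"
        using R_inner[OF c] lam_nonneg[of c] by (simp add: mult.assoc[symmetric] real_sqrt_mult_self)
      moreover have "A *v c = lam c *\<^sub>R c" using eigB[OF c] unfolding lam_def .
      ultimately show "(sqrt (lam c) * (c \<bullet> (R *v x))) *\<^sub>R c = (c \<bullet> x) *\<^sub>R (A *v c)"
        by (simp add: mult.commute)
    qed simp
    also have "\<dots> = A *v (\<Sum>b\<in>B. (b \<bullet> x) *\<^sub>R b)"
      by (simp add: linear_sum matrix_vector_mult_scaleR)
    finally show "(R ** R) *v x = A *v x" unfolding expand .
  qed
  moreover have "pos_semidef R"
    unfolding pos_semidef_def sym_mat_def
  proof (intro conjI allI)
    show "transpose R = R" unfolding R_def transpose_def by (simp add: vec_eq_iff mult.commute)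
    fix x
    have "x \<bullet> (R *v x) = (\<Sum>b\<in>B. sqrt (lam b) * ((b \<bullet> x) * (b \<bullet> x)))"
      unfolding R_apply by (simp add: inner_sum_right inner_commute[of x] mult.assoc)
    also have "\<dots> \<ge> 0" by (intro sum_nonneg mult_nonneg_nonneg zero_le_square) (simp_all add: lam_nonneg)
    finally show "0 \<le> x \<bullet> (R *v x)" .
  qed
  ultimately show thesis using that by blast
qed

lemma pos_semidef_sqrt_unique:
  fixes R S :: "real^'n^'n"
  assumes R: "pos_semidef R" and S: "pos_semidef S" and RS: "R ** R = S ** S"
  shows "R = S"
proof -
  have R_sym: "transpose R = R" and S_sym: "transpose S = S"
    using R S unfolding pos_semidef_def sym_mat_def by auto
  obtain B where "finite B" "pairwise orthogonal B" "\<And>b. b \<in> B \<Longrightarrow> norm b = 1"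
    and eigB: "\<And>b. b \<in> B \<Longrightarrow> S *v b = (b \<bullet> (S *v b)) *\<^sub>R b"
    and expand: "\<And>x. (\<Sum>b\<in>B. (b \<bullet> x) *\<^sub>R b) = x"
    using symmetric_matrix_orthonormal_eigenbasis[OF S_sym] by blast
  \<comment> \<open>On an eigenvector b of S with eigenvalue \<mu>, the vector \<open>w = R b - \<mu> b\<close> satisfies
    \<open>R w = - \<mu> w\<close>, which positivity of R only allows for w = 0.\<close>
  have "R *v b = S *v b" if b: "b \<in> B" for b
  proof -
    define \<mu> where "\<mu> = b \<bullet> (S *v b)"
    have \<mu>_nonneg: "0 \<le> \<mu>" using S unfolding \<mu>_def pos_semidef_def by blast
    have Sb: "S *v b = \<mu> *\<^sub>R b" using eigB[OF b] unfolding \<mu>_def .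
    define w where "w = R *v b - \<mu> *\<^sub>R b"
    have "R *v (R *v b) = S *v (S *v b)" by (simp add: matrix_vector_mul_assoc RS)
    also have "\<dots> = (\<mu> * \<mu>) *\<^sub>R b" by (simp add: Sb matrix_vector_mult_scaleR)
    finally have Rw: "R *v w = - \<mu> *\<^sub>R w"
      unfolding w_def by (simp add: matrix_vector_mult_diff_distrib matrix_vector_mult_scaleR algebra_simps)
    have "w \<bullet> w = 0"
    proof (cases "\<mu> = 0")
      case True
      hence w: "w = R *v b" unfolding w_def by simp
      have "w \<bullet> w = b \<bullet> (R *v w)"
        unfolding w using inner_matrix_vector_sym[OF R_sym, of b "R *v b"] by simp
      thus ?thesis using Rw True by simp
    next
      case False
      have "0 \<le> w \<bullet> (R *v w)" using R unfolding pos_semidef_def by blast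
      hence "\<mu> * (w \<bullet> w) \<le> \<mu> * 0" using Rw by simp
      moreover have "0 < \<mu>" using False \<mu>_nonneg by simp
      ultimately have "w \<bullet> w \<le> 0" by (simp only: mult_le_cancel_left_pos)
      thus ?thesis using inner_ge_zero[of w] by linarith
    qed
    thus ?thesis using Sb unfolding w_def by simp
  qed
  hence "R *v x = S *v x" for x
    by (subst (1 2) expand[of x, symmetric]) (simp add: linear_sum matrix_vector_mult_scaleR)
  thus ?thesis by (simp add: matrix_eq)
qed

lemma pos_semidef_mat_sqrt:
  fixes A :: "real^'n^'n"
  assumes "pos_semidef A"
  shows "pos_semidef (mat_sqrt A) \<and> mat_sqrt A ** mat_sqrt A = A"
proof -
  obtain R where R: "pos_semidef R" "R ** R = A"
    using pos_semidef_sqrt_exists[OF assms] by blast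
  have "\<exists>!R. pos_semidef R \<and> R ** R = A"
    using R by (intro ex1I[of _ R]) (auto intro!: pos_semidef_sqrt_unique)
  thus ?thesis unfolding mat_sqrt_def by (rule theI')
qed

lemma frob_norm_mat_sqrt_mult:
  fixes S :: "real^'n^'n"
  assumes "pos_semidef S"
  shows "(frob_norm (mat_sqrt S ** Z))\<^sup>2 = trace (transpose Z ** S ** Z)"
proof -
  have "transpose (mat_sqrt S) = mat_sqrt S" "mat_sqrt S ** mat_sqrt S = S"
    using pos_semidef_mat_sqrt[OF assms] unfolding pos_semidef_def sym_mat_def by auto
  moreover have "transpose Z ** transpose (mat_sqrt S) ** (mat_sqrt S ** Z)
      = transpose Z ** (transpose (mat_sqrt S) ** mat_sqrt S) ** Z"
    by (simp add: matrix_mul_assoc)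
  ultimately show ?thesis by (simp add: frob_norm_sq matrix_transpose_mul)
qed

section \<open>The pseudoinverse of a Gram matrix\<close>

lemma penrose_conditions_unique:
  fixes M :: "real^'c^'r" and B C :: "real^'r^'c"
  assumes B: "M ** B ** M = M" "B ** M ** B = B" "transpose (M ** B) = M ** B" "transpose (B ** M) = B ** M"
    and C: "M ** C ** M = M" "C ** M ** C = C" "transpose (M ** C) = M ** C" "transpose (C ** M) = C ** M"
  shows "B = C"
proof -
  have MB: "transpose B ** transpose M = M ** B" and BM: "transpose M ** transpose B = B ** M"
    and MC: "transpose C ** transpose M = M ** C" and CM: "transpose M ** transpose C = C ** M"
    using B(3,4) C(3,4) by (simp_all add: matrix_transpose_mul)
  have MCM: "transpose M = transpose M ** transpose C ** transpose M"
    and MBM: "transpose M = transpose M ** transpose B ** transpose M"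
    using arg_cong[OF C(1), of transpose] arg_cong[OF B(1), of transpose]
    by (simp_all add: matrix_transpose_mul matrix_mul_assoc)
  have "B = B ** (transpose B ** transpose M)" using B(2) by (simp add: MB matrix_mul_assoc)
  also have "\<dots> = B ** transpose B ** (transpose M ** transpose C ** transpose M)"
    by (subst MCM[symmetric]) (simp add: matrix_mul_assoc)
  also have "\<dots> = B ** (transpose B ** transpose M) ** (transpose C ** transpose M)"
    by (simp add: matrix_mul_assoc)
  also have "\<dots> = B ** M ** C" using B(2) by (simp add: MB MC matrix_mul_assoc)
  finally have B_eq: "B = B ** M ** C" .
  have "C = transpose M ** transpose C ** C" using C(2) by (simp add: CM)
  also have "\<dots> = (transpose M ** transpose B ** transpose M) ** transpose C ** C"
    by (subst MBM[symmetric]) simp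
  also have "\<dots> = (transpose M ** transpose B) ** (transpose M ** transpose C) ** C"
    by (simp add: matrix_mul_assoc)
  also have "\<dots> = B ** M ** (C ** M ** C)" by (simp add: BM CM matrix_mul_assoc)
  finally have "C = B ** M ** C" unfolding C(2) .
  with B_eq show ?thesis by (rule trans[OF _ sym])
qed

lemma pinv_eqI:
  fixes M :: "real^'c^'r" and B :: "real^'r^'c"
  assumes "M ** B ** M = M" "B ** M ** B = B" "transpose (M ** B) = M ** B" "transpose (B ** M) = B ** M"
  shows "pinv M = B"
  unfolding pinv_def using assms penrose_conditions_unique by (intro the_equality) blast+

lemma gram_right_inverse:
  fixes X :: "real^'d^'n"
  assumes "invertible (X ** transpose X)"
  defines "Q \<equiv> transpose X ** matrix_inv (X ** transpose X)"
  shows "X ** Q = mat 1" "Q ** (X ** transpose X) = transpose X"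
    and "transpose X ** X ** Q = transpose X" "transpose (Q ** X) = Q ** X"
proof -
  let ?V = "matrix_inv (X ** transpose X)"
  have V_sym: "transpose ?V = ?V"
    using transpose_matrix_inv_sym[OF assms(1)] by (simp add: matrix_transpose_mul)
  show XQ: "X ** Q = mat 1"
    unfolding Q_def using matrix_inv_right[OF assms(1)] by (simp add: matrix_mul_assoc)
  show "Q ** (X ** transpose X) = transpose X"
    unfolding Q_def using matrix_inv_left[OF assms(1)] by (simp add: matrix_mul_assoc[symmetric])
  show "transpose X ** X ** Q = transpose X"
    using XQ by (simp add: matrix_mul_assoc[symmetric])
  show "transpose (Q ** X) = Q ** X"
    unfolding Q_def by (simp add: matrix_transpose_mul V_sym matrix_mul_assoc)
qed

lemma pinv_gram:
  fixes X :: "real^'d^'n"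
  assumes "invertible (X ** transpose X)"
  defines "Q \<equiv> transpose X ** matrix_inv (X ** transpose X)"
  shows "pinv (transpose X ** X) = Q ** transpose Q"
proof (rule pinv_eqI)
  let ?G = "transpose X ** X"
  note Q = gram_right_inverse[OF assms(1), folded Q_def]
  have QG: "transpose Q ** ?G = X"
    using arg_cong[OF Q(3), of transpose] by (simp add: matrix_transpose_mul matrix_mul_assoc)
  have GQQ: "?G ** (Q ** transpose Q) = transpose (Q ** X)"
    using Q(3) by (simp add: matrix_transpose_mul matrix_mul_assoc)
  have QQG: "Q ** transpose Q ** ?G = Q ** X"
    using QG by (simp add: matrix_mul_assoc[symmetric])
  show "?G ** (Q ** transpose Q) ** ?G = ?G"
    unfolding GQQ by (simp add: matrix_transpose_mul matrix_mul_assoc[symmetric] QG)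
  have "Q ** X ** (Q ** transpose Q) = Q ** (X ** Q) ** transpose Q"
    by (simp add: matrix_mul_assoc)
  thus "Q ** transpose Q ** ?G ** (Q ** transpose Q) = Q ** transpose Q"
    unfolding QQG Q(1) by simp
  show "transpose (?G ** (Q ** transpose Q)) = ?G ** (Q ** transpose Q)"
    unfolding GQQ Q(4) ..
  show "transpose (Q ** transpose Q ** ?G) = Q ** transpose Q ** ?G"
    unfolding QQG by (rule Q(4))
qed

section \<open>The risks of the regularized estimator\<close>

lemma gram_shift_inverse:
  fixes X :: "real^'d^'n"
  assumes "c > 0"
  defines "G \<equiv> transpose X ** X"
  defines "K \<equiv> matrix_inv (G + c *\<^sub>R mat 1)"
  shows "K ** (G + c *\<^sub>R mat 1) = mat 1" "(G + c *\<^sub>R mat 1) ** K = mat 1"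
    and "transpose K = K" "K ** G = G ** K"
proof -
  have inv: "invertible (G + c *\<^sub>R mat 1)"
    unfolding G_def using pos_def_gram_shift[OF assms(1)] by (rule pos_def_invertible)
  show "K ** (G + c *\<^sub>R mat 1) = mat 1" "(G + c *\<^sub>R mat 1) ** K = mat 1"
    unfolding K_def using matrix_inv_left[OF inv] matrix_inv_right[OF inv] by auto
  show "transpose K = K"
    unfolding K_def using inv
    by (rule transpose_matrix_inv_sym) (simp add: G_def transpose_add transpose_scalar matrix_transpose_mul)
  show "K ** G = G ** K"
    unfolding K_def using inv by (rule matrix_inv_shift_commute)
qed

lemma trace_quadratic_shift:
  fixes S N F :: "real^'n^'n"
  assumes S: "transpose S = S" and N: "transpose N = N" and F: "transpose F = F"
  shows "trace (transpose (mat 1 - t *\<^sub>R N) ** S ** (mat 1 - t *\<^sub>R N) ** F)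
           - 2 * trace (S ** (mat 1 - t *\<^sub>R N) ** F)
         = t\<^sup>2 * trace (N ** S ** N ** F) - trace (S ** F)"
proof -
  have "transpose (S ** N ** F) = F ** N ** S"
    by (simp add: matrix_transpose_mul S N F matrix_mul_assoc)
  hence "trace (S ** N ** F) = trace (F ** N ** S)"
    by (metis trace_transpose)
  also have "\<dots> = trace (N ** S ** F)"
    using trace_mul_sym[of F "N ** S"] by (simp add: matrix_mul_assoc)
  finally have swap: "trace (S ** N ** F) = trace (N ** S ** F)" .
  have quadratic: "transpose (mat 1 - t *\<^sub>R N) ** S ** (mat 1 - t *\<^sub>R N) ** F
      = S ** F - t *\<^sub>R (S ** N ** F) - t *\<^sub>R (N ** S ** F) + (t * t) *\<^sub>R (N ** S ** N ** F)"
    by (simp add: transpose_diff transpose_scalar N matrix_diff_ldistrib matrix_diff_rdistrib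
        matrix_add_ldistrib matrix_add_rdistrib matrix_scaleR_left matrix_scaleR_right matrix_mul_assoc
        algebra_simps)
  have linear: "S ** (mat 1 - t *\<^sub>R N) ** F = S ** F - t *\<^sub>R (S ** N ** F)"
    by (simp add: matrix_diff_ldistrib matrix_diff_rdistrib matrix_scaleR_left matrix_scaleR_right
        matrix_mul_assoc)
  show ?thesis
    unfolding quadratic linear
    by (simp add: trace_add trace_sub trace_scaleR swap power2_eq_square algebra_simps)
qed

lemma riskP_eq_trace:
  fixes X :: "real^'d^'n" and S E :: "real^'d^'d" and \<sigma> :: real
  defines "G \<equiv> transpose X ** X" and "c \<equiv> real CARD('d) * \<sigma>\<^sup>2"
  defines "K \<equiv> matrix_inv (G + c *\<^sub>R mat 1)"
  assumes S: "pos_semidef S" and "\<sigma> \<noteq> 0"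
  shows "real CARD('d) * riskP \<sigma> X (E ** K ** transpose X) S
       = trace (transpose E ** S ** E ** (G ** K)) - 2 * trace (S ** E ** (G ** K)) + trace S"
proof -
  have "c > 0" unfolding c_def using \<open>\<sigma> \<noteq> 0\<close> by simp
  note K = gram_shift_inverse[OF this, of X, folded G_def, folded K_def]
  define F where "F = G ** K"
  have S_sym: "transpose S = S" using S unfolding pos_semidef_def sym_mat_def by blast
  have F_sym: "transpose F = F"
    unfolding F_def using K(3,4) by (simp add: matrix_transpose_mul G_def)
  have "E ** K ** transpose X ** X = E ** (K ** G)" by (simp add: G_def matrix_mul_assoc)
  hence AX: "E ** K ** transpose X ** X = E ** F" unfolding F_def K(4) .
  have fit: "(frob_norm (mat_sqrt S ** (E ** K ** transpose X ** X - mat 1)))\<^sup>2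
      = trace (transpose E ** S ** E ** (F ** F)) - 2 * trace (S ** E ** F) + trace S"
  proof -
    have "transpose (E ** F - mat 1) ** S ** (E ** F - mat 1)
        = F ** (transpose E ** S ** E ** F) - transpose (S ** E ** F) - S ** E ** F + S"
      by (simp add: transpose_diff matrix_transpose_mul matrix_diff_ldistrib matrix_diff_rdistrib
          matrix_mul_assoc S_sym F_sym)
    thus ?thesis
      using trace_mul_sym[of F "transpose E ** S ** E ** F"]
      by (simp add: frob_norm_mat_sqrt_mult[OF S] AX trace_add trace_sub trace_transpose matrix_mul_assoc)
  qed
  have penalty: "(frob_norm (mat_sqrt S ** (E ** K ** transpose X)))\<^sup>2
      = trace (transpose E ** S ** E ** (K ** G ** K))"
  proof -
    have "(frob_norm (mat_sqrt S ** (E ** K ** transpose X)))\<^sup>2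
        = trace (X ** (K ** transpose E ** S ** E ** K ** transpose X))"
      by (subst frob_norm_mat_sqrt_mult[OF S]) (simp add: matrix_transpose_mul K(3) matrix_mul_assoc)
    also have "\<dots> = trace (K ** (transpose E ** S ** E ** (K ** G)))"
      using trace_mul_sym[of X "K ** transpose E ** S ** E ** K ** transpose X"]
      by (simp add: G_def matrix_mul_assoc)
    also have "\<dots> = trace (transpose E ** S ** E ** (K ** G ** K))"
      using trace_mul_sym[of K "transpose E ** S ** E ** (K ** G)"] by (simp add: matrix_mul_assoc)
    finally show ?thesis .
  qed
  have "F ** F + c *\<^sub>R (K ** G ** K) = (G + c *\<^sub>R mat 1) ** K ** (G ** K)"
    unfolding F_def by (simp add: matrix_add_rdistrib matrix_scaleR_left K(4) matrix_mul_assoc)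
  hence FF: "F ** F + c *\<^sub>R (K ** G ** K) = F" by (simp add: K(2) F_def)
  have "real CARD('d) * riskP \<sigma> X (E ** K ** transpose X) S
      = trace (transpose E ** S ** E ** (F ** F)) - 2 * trace (S ** E ** F) + trace S
        + c * trace (transpose E ** S ** E ** (K ** G ** K))"
    unfolding riskP_def fit penalty c_def by (simp add: algebra_simps)
  also have "\<dots> = trace (transpose E ** S ** E ** (F ** F + c *\<^sub>R (K ** G ** K)))
      - 2 * trace (S ** E ** F) + trace S"
    by (simp add: matrix_add_ldistrib trace_add matrix_scaleR_right trace_scaleR)
  also have "\<dots> = trace (transpose E ** S ** E ** F) - 2 * trace (S ** E ** F) + trace S"
    unfolding FF ..
  finally show ?thesis by (simp only: F_def)
qed

lemma riskP_Aopt: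
  fixes X :: "real^'d^'n" and \<Sigma> :: "real^'d^'d" and \<sigma> \<rho> :: real
  defines "G \<equiv> transpose X ** X"
  defines "N \<equiv> matrix_inv (\<Sigma> - (\<rho> / real CARD('d)) *\<^sub>R G)"
    and "K \<equiv> matrix_inv (G + (real CARD('d) * \<sigma>\<^sup>2) *\<^sub>R mat 1)"
  assumes \<Sigma>: "pos_semidef \<Sigma>" and "\<sigma> \<noteq> 0" and M: "invertible (\<Sigma> - (\<rho> / real CARD('d)) *\<^sub>R G)"
  shows "real CARD('d) * riskP \<sigma> X (Aopt \<sigma> X \<rho> \<Sigma>) \<Sigma>
       = (\<rho> * \<sigma>\<^sup>2)\<^sup>2 * trace (N ** \<Sigma> ** N ** G ** K) - trace (\<Sigma> ** G ** K) + trace \<Sigma>"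
proof -
  have "real CARD('d) * \<sigma>\<^sup>2 > 0" using \<open>\<sigma> \<noteq> 0\<close> by simp
  note K = gram_shift_inverse[OF this, of X, folded G_def, folded K_def]
  have \<Sigma>_sym: "transpose \<Sigma> = \<Sigma>" using \<Sigma> unfolding pos_semidef_def sym_mat_def by blast
  have N_sym: "transpose N = N"
    unfolding N_def using M
    by (rule transpose_matrix_inv_sym) (simp add: G_def transpose_diff transpose_scalar matrix_transpose_mul \<Sigma>_sym)
  have F_sym: "transpose (G ** K) = G ** K"
    using K(3,4) by (simp add: matrix_transpose_mul G_def)
  have "Aopt \<sigma> X \<rho> \<Sigma> = (mat 1 - (\<rho> * \<sigma>\<^sup>2) *\<^sub>R N) ** K ** transpose X"
    unfolding Aopt_def N_def K_def G_def ..
  hence "real CARD('d) * riskP \<sigma> X (Aopt \<sigma> X \<rho> \<Sigma>) \<Sigma>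
      = trace (transpose (mat 1 - (\<rho> * \<sigma>\<^sup>2) *\<^sub>R N) ** \<Sigma> ** (mat 1 - (\<rho> * \<sigma>\<^sup>2) *\<^sub>R N) ** (G ** K))
        - 2 * trace (\<Sigma> ** (mat 1 - (\<rho> * \<sigma>\<^sup>2) *\<^sub>R N) ** (G ** K)) + trace \<Sigma>"
    using riskP_eq_trace[OF \<Sigma> \<open>\<sigma> \<noteq> 0\<close>, of X, folded G_def, folded K_def] by simp
  also have "\<dots> = (\<rho> * \<sigma>\<^sup>2)\<^sup>2 * trace (N ** \<Sigma> ** N ** (G ** K)) - trace (\<Sigma> ** (G ** K)) + trace \<Sigma>"
    unfolding trace_quadratic_shift[OF \<Sigma>_sym N_sym F_sym] ..
  finally show ?thesis by (simp add: matrix_mul_assoc)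
qed

lemma riskP_Aopt_sub:
  fixes X :: "real^'d^'n" and \<Sigma> :: "real^'d^'d" and \<sigma> \<rho> :: real
  assumes "pos_semidef \<Sigma>" "invertible \<Sigma>" "\<sigma> \<noteq> 0"
    and "invertible (\<Sigma> - (\<rho> / real CARD('d)) *\<^sub>R (transpose X ** X))"
  shows "riskP \<sigma> X (Aopt \<sigma> X \<rho> \<Sigma>) \<Sigma> - riskP \<sigma> X (Aopt \<sigma> X 0 \<Sigma>) \<Sigma> =
           (\<rho>\<^sup>2 * \<sigma> ^ 4 / real CARD('d)) *
           trace (matrix_inv (\<Sigma> - (\<rho> / real CARD('d)) *\<^sub>R (transpose X ** X)) ** \<Sigma>
                  ** matrix_inv (\<Sigma> - (\<rho> / real CARD('d)) *\<^sub>R (transpose X ** X))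
                  ** (transpose X ** X)
                  ** matrix_inv (transpose X ** X + (real CARD('d) * \<sigma>\<^sup>2) *\<^sub>R mat 1))"
    (is "?P\<rho> - ?P0 = _ * ?T")
proof -
  let ?b = "trace (\<Sigma> ** (transpose X ** X) **
              matrix_inv (transpose X ** X + (real CARD('d) * \<sigma>\<^sup>2) *\<^sub>R mat 1))"
  have "real CARD('d) * ?P\<rho> = (\<rho> * \<sigma>\<^sup>2)\<^sup>2 * ?T - ?b + trace \<Sigma>"
    using riskP_Aopt[OF assms(1,3,4)] by (simp add: matrix_mul_assoc)
  moreover have "real CARD('d) * ?P0 = - ?b + trace \<Sigma>"
    using riskP_Aopt[of \<Sigma> \<sigma> 0 X] assms(1-3) by simp
  ultimately have "(?P\<rho> - ?P0) * real CARD('d) = (\<rho> * \<sigma>\<^sup>2)\<^sup>2 * ?T"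
    by (simp add: algebra_simps)
  hence "?P\<rho> - ?P0 = (\<rho> * \<sigma>\<^sup>2)\<^sup>2 * ?T / real CARD('d)"
    by (simp add: eq_divide_eq)
  thus ?thesis by (simp add: power_mult_distrib power_mult[symmetric] mult_ac)
qed

lemma riskT_residual:
  fixes X :: "real^'d^'n" and A :: "real^'n^'d" and \<sigma> :: real
  defines "c \<equiv> real CARD('d) * \<sigma>\<^sup>2"
  assumes residual: "X ** A - mat 1 = (- c) *\<^sub>R Y"
  shows "real CARD('n) * real CARD('d) * riskT \<sigma> X A S
       = c\<^sup>2 * trace (Y ** (X ** transpose X + c *\<^sub>R mat 1) ** transpose Y)"
proof -
  have "X ** A ** X - X = (- c) *\<^sub>R (Y ** X)"
    using arg_cong[OF residual, of "\<lambda>Z. Z ** X"]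
    by (simp add: matrix_diff_rdistrib matrix_scaleR_left del: scaleR_minus_left)
  hence fit: "(frob_norm (X ** A ** X - X))\<^sup>2 = c\<^sup>2 * trace (Y ** X ** transpose (Y ** X))"
    by (simp add: frob_norm_scaleR power_mult_distrib frob_norm_sq' del: scaleR_minus_left)
  have penalty: "(frob_norm (X ** A - mat 1))\<^sup>2 = c\<^sup>2 * trace (Y ** transpose Y)"
    by (simp add: residual frob_norm_scaleR power_mult_distrib frob_norm_sq' del: scaleR_minus_left)
  have "Y ** (X ** transpose X + c *\<^sub>R mat 1) ** transpose Y
      = Y ** X ** transpose (Y ** X) + c *\<^sub>R (Y ** transpose Y)"
    by (simp add: matrix_add_ldistrib matrix_add_rdistrib matrix_scaleR_left matrix_scaleR_right
        matrix_transpose_mul matrix_mul_assoc)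
  moreover have "real CARD('n) * real CARD('d) * riskT \<sigma> X A S
      = (frob_norm (X ** A ** X - X))\<^sup>2 + c * (frob_norm (X ** A - mat 1))\<^sup>2"
    unfolding riskT_def c_def by (simp add: field_simps)
  ultimately show ?thesis
    unfolding fit penalty by (simp add: trace_add trace_scaleR algebra_simps)
qed

lemma Aopt_residual:
  fixes X :: "real^'d^'n" and \<Sigma> :: "real^'d^'d" and \<sigma> \<rho> :: real
  defines "G \<equiv> transpose X ** X" and "c \<equiv> real CARD('d) * \<sigma>\<^sup>2"
  defines "N \<equiv> matrix_inv (\<Sigma> - (\<rho> / real CARD('d)) *\<^sub>R G)" and "K \<equiv> matrix_inv (G + c *\<^sub>R mat 1)"
    and "Q \<equiv> transpose X ** matrix_inv (X ** transpose X)"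
  assumes XX: "invertible (X ** transpose X)" and M: "invertible (\<Sigma> - (\<rho> / real CARD('d)) *\<^sub>R G)"
    and "\<sigma> \<noteq> 0"
  shows "X ** Aopt \<sigma> X \<rho> \<Sigma> - mat 1 = (- c) *\<^sub>R (X ** N ** \<Sigma> ** K ** Q)"
proof -
  define t where "t = \<rho> * \<sigma>\<^sup>2"
  have "c > 0" unfolding c_def using \<open>\<sigma> \<noteq> 0\<close> by simp
  note K = gram_shift_inverse[OF this, of X, folded G_def, folded K_def]
  note Q = gram_right_inverse[OF XX, folded Q_def, folded G_def]
  have "N ** \<Sigma> - (\<rho> / real CARD('d)) *\<^sub>R (N ** G) = mat 1"
    using matrix_inv_left[OF M] by (simp add: N_def matrix_diff_ldistrib matrix_scaleR_right)
  hence "c *\<^sub>R (N ** \<Sigma>) = c *\<^sub>R mat 1 + t *\<^sub>R (N ** G)"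
    unfolding c_def t_def by (simp add: algebra_simps)
  hence EG: "(mat 1 - t *\<^sub>R N) ** G = G + c *\<^sub>R mat 1 - c *\<^sub>R (N ** \<Sigma>)"
    by (simp add: matrix_diff_rdistrib matrix_scaleR_left algebra_simps)
  have "Aopt \<sigma> X \<rho> \<Sigma> = (mat 1 - t *\<^sub>R N) ** K ** transpose X"
    unfolding Aopt_def N_def K_def G_def c_def t_def ..
  also have "\<dots> = (mat 1 - t *\<^sub>R N) ** (K ** G) ** Q"
    unfolding Q(3)[symmetric] by (simp add: matrix_mul_assoc)
  also have "\<dots> = ((mat 1 - t *\<^sub>R N) ** G) ** K ** Q"
    unfolding K(4) by (simp add: matrix_mul_assoc)
  also have "\<dots> = (G + c *\<^sub>R mat 1) ** K ** Q - c *\<^sub>R (N ** \<Sigma> ** K ** Q)"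
    unfolding EG by (simp add: matrix_diff_rdistrib matrix_scaleR_left)
  finally show ?thesis
    using Q(1) by (simp add: K(2) matrix_diff_ldistrib matrix_scaleR_right matrix_mul_assoc)
qed

lemma riskT_Aopt:
  fixes X :: "real^'d^'n" and \<Sigma> :: "real^'d^'d" and \<sigma> \<rho> :: real
  assumes XX: "invertible (X ** transpose X)" and \<Sigma>: "transpose \<Sigma> = \<Sigma>" and "\<sigma> \<noteq> 0"
    and M: "invertible (\<Sigma> - (\<rho> / real CARD('d)) *\<^sub>R (transpose X ** X))"
  shows "riskT \<sigma> X (Aopt \<sigma> X \<rho> \<Sigma>) \<Sigma> =
           (real CARD('d) * \<sigma> ^ 4 / real CARD('n)) *
           trace (\<Sigma> ** matrix_inv (\<Sigma> - (\<rho> / real CARD('d)) *\<^sub>R (transpose X ** X))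
                  ** (transpose X ** X)
                  ** matrix_inv (\<Sigma> - (\<rho> / real CARD('d)) *\<^sub>R (transpose X ** X))
                  ** \<Sigma> ** pinv (transpose X ** X)
                  ** matrix_inv (transpose X ** X + (real CARD('d) * \<sigma>\<^sup>2) *\<^sub>R mat 1))"
proof -
  define G where "G = transpose X ** X"
  define c where "c = real CARD('d) * \<sigma>\<^sup>2"
  define N where "N = matrix_inv (\<Sigma> - (\<rho> / real CARD('d)) *\<^sub>R G)"
  define K where "K = matrix_inv (G + c *\<^sub>R mat 1)"
  define Q where "Q = transpose X ** matrix_inv (X ** transpose X)"
  define W where "W = X ** N ** \<Sigma>"
  have "c > 0" unfolding c_def using \<open>\<sigma> \<noteq> 0\<close> by simp
  note K = gram_shift_inverse[OF this, of X, folded G_def, folded K_def]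
  note Q = gram_right_inverse[OF XX, folded Q_def, folded G_def]
  have N_sym: "transpose N = N"
    unfolding N_def using M[folded G_def]
    by (rule transpose_matrix_inv_sym) (simp add: G_def transpose_diff transpose_scalar matrix_transpose_mul \<Sigma>)
  have QM: "Q ** (X ** transpose X + c *\<^sub>R mat 1) = (G + c *\<^sub>R mat 1) ** Q"
    using Q(2,3) by (simp add: matrix_add_ldistrib matrix_add_rdistrib matrix_scaleR_left matrix_scaleR_right)
  have "real CARD('n) * real CARD('d) * riskT \<sigma> X (Aopt \<sigma> X \<rho> \<Sigma>) \<Sigma>
      = c\<^sup>2 * trace (W ** K ** Q ** (X ** transpose X + c *\<^sub>R mat 1) ** transpose (W ** K ** Q))"
    unfolding c_def
    by (rule riskT_residual) (use Aopt_residual[OF XX M \<open>\<sigma> \<noteq> 0\<close>] in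
        \<open>simp add: G_def N_def K_def Q_def W_def c_def matrix_mul_assoc\<close>)
  also have "W ** K ** Q ** (X ** transpose X + c *\<^sub>R mat 1) ** transpose (W ** K ** Q)
      = W ** K ** (Q ** (X ** transpose X + c *\<^sub>R mat 1)) ** (transpose Q ** K ** transpose W)"
    by (simp add: matrix_transpose_mul K(3) matrix_mul_assoc)
  also have "\<dots> = W ** (K ** (G + c *\<^sub>R mat 1)) ** Q ** transpose Q ** K ** transpose W"
    unfolding QM by (simp add: matrix_mul_assoc)
  also have "\<dots> = W ** (Q ** transpose Q) ** K ** transpose W"
    by (simp add: K(1) matrix_mul_assoc)
  also have "trace \<dots> = trace (X ** (N ** \<Sigma> ** (Q ** transpose Q) ** K ** \<Sigma> ** N ** transpose X))"
    unfolding W_def by (simp add: matrix_transpose_mul N_sym \<Sigma> matrix_mul_assoc)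
  also have "\<dots> = trace (N ** \<Sigma> ** (Q ** transpose Q) ** K ** (\<Sigma> ** N ** G))"
    using trace_mul_sym[of X "N ** \<Sigma> ** (Q ** transpose Q) ** K ** \<Sigma> ** N ** transpose X"]
    by (simp add: G_def matrix_mul_assoc)
  also have "\<dots> = trace (\<Sigma> ** N ** G ** N ** \<Sigma> ** pinv G ** K)"
    using trace_mul_sym[of "N ** \<Sigma> ** (Q ** transpose Q) ** K" "\<Sigma> ** N ** G"]
    by (simp add: pinv_gram[OF XX, folded Q_def, folded G_def] matrix_mul_assoc)
  finally have risk: "real CARD('n) * real CARD('d) * riskT \<sigma> X (Aopt \<sigma> X \<rho> \<Sigma>) \<Sigma>
      = c\<^sup>2 * trace (\<Sigma> ** N ** G ** N ** \<Sigma> ** pinv G ** K)" .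
  have "c\<^sup>2 = real CARD('d) * (real CARD('d) * \<sigma> ^ 4)"
    unfolding c_def by (simp add: power2_eq_square power4_eq_xxxx mult_ac)
  hence "real CARD('d) * (riskT \<sigma> X (Aopt \<sigma> X \<rho> \<Sigma>) \<Sigma> * real CARD('n))
      = real CARD('d) * (real CARD('d) * \<sigma> ^ 4 * trace (\<Sigma> ** N ** G ** N ** \<Sigma> ** pinv G ** K))"
    using risk by (simp add: mult_ac)
  hence "riskT \<sigma> X (Aopt \<sigma> X \<rho> \<Sigma>) \<Sigma> * real CARD('n)
      = real CARD('d) * \<sigma> ^ 4 * trace (\<Sigma> ** N ** G ** N ** \<Sigma> ** pinv G ** K)"
    by simp
  hence "riskT \<sigma> X (Aopt \<sigma> X \<rho> \<Sigma>) \<Sigma>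
      = (real CARD('d) * \<sigma> ^ 4 / real CARD('n)) * trace (\<Sigma> ** N ** G ** N ** \<Sigma> ** pinv G ** K)"
    by (simp add: eq_divide_eq)
  thus ?thesis unfolding N_def K_def G_def c_def .
qed

theorem lemma3:
  fixes X :: "real^'d^'n" and \<Sigma> :: "real^'d^'d" and \<sigma> \<rho> :: real
  assumes "CARD('d) \<ge> CARD('n)"
    and "invertible (X ** transpose X)"
    and "pos_def \<Sigma>"
    and "\<sigma> > 0"
    and "\<rho> \<ge> 0"
    and "pos_def (\<Sigma> - (\<rho> / real CARD('d)) *\<^sub>R (transpose X ** X))"
  shows "riskP \<sigma> X (Aopt \<sigma> X \<rho> \<Sigma>) \<Sigma> - riskP \<sigma> X (Aopt \<sigma> X 0 \<Sigma>) \<Sigma> =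
           (\<rho>\<^sup>2 * \<sigma> ^ 4 / real CARD('d)) *
           trace (matrix_inv (\<Sigma> - (\<rho> / real CARD('d)) *\<^sub>R (transpose X ** X)) ** \<Sigma>
                  ** matrix_inv (\<Sigma> - (\<rho> / real CARD('d)) *\<^sub>R (transpose X ** X))
                  ** (transpose X ** X)
                  ** matrix_inv (transpose X ** X + (real CARD('d) * \<sigma>\<^sup>2) *\<^sub>R mat 1))
         \<and> riskT \<sigma> X (Aopt \<sigma> X \<rho> \<Sigma>) \<Sigma> =
           (real CARD('d) * \<sigma> ^ 4 / real CARD('n)) *
           trace (\<Sigma> ** matrix_inv (\<Sigma> - (\<rho> / real CARD('d)) *\<^sub>R (transpose X ** X))
                  ** (transpose X ** X)
                  ** matrix_inv (\<Sigma> - (\<rho> / real CARD('d)) *\<^sub>R (transpose X ** X))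
                  ** \<Sigma> ** pinv (transpose X ** X)
                  ** matrix_inv (transpose X ** X + (real CARD('d) * \<sigma>\<^sup>2) *\<^sub>R mat 1))"
proof -
  have \<Sigma>: "transpose \<Sigma> = \<Sigma>" "pos_semidef \<Sigma>" "invertible \<Sigma>"
    using assms(3) pos_def_imp_pos_semidef pos_def_invertible unfolding pos_def_def sym_mat_def by auto
  have M: "invertible (\<Sigma> - (\<rho> / real CARD('d)) *\<^sub>R (transpose X ** X))"
    using assms(6) by (rule pos_def_invertible)
  have "\<sigma> \<noteq> 0" using assms(4) by simp
  thus ?thesis using riskP_Aopt_sub[OF \<Sigma>(2,3) _ M] riskT_Aopt[OF assms(2) \<Sigma>(1) _ M] by blast
qed

end
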